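(* Let $A\in\mathbb{R}^{n\times n}$ be Hurwitz, $B\in\mathbb{R}^{n\times 1}$, $C\in\mathbb{R}^{1\times n}$, and for $p_1>0$ define $$f(p_1)=2\,C(p_1I-A)^{-1}\big(p_1BB^T\big)(p_1I-A)^{-T}C^T .$$ Define $T_2=-C$, $T_4=A^{-1}$, $T_6=A^{-1}BB^TA^{-T}$, $T_3=T_6C^T$, $T_5=-(T_6T_4^T+T_4T_6^T)$. Suppose $\gamma\in\mathbb{R}$ and $S\in\mathbb{R}^{n\times n}$ satisfy the linear matrix inequalities $$S+S^T\succeq 0,\qquad L:=\begin{bmatrix}\gamma^2 & T_3^T-T_2S^T\\ T_3-ST_2^T & -ST_4^T-T_4S^T+T_5\end{bmatrix}\succeq 0 .$$ Then $\gamma^2\ge f(p_1)$ for all $p_1>0$. Consequently, an upper bound on $\sup_{p_1>0}f(p_1)$ is obtained by minimizing $\gamma^2$ over $(\gamma,S)$ subject to these LMIs.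
   Context: $A$ Hurwitz means all eigenvalues of $A$ have negative real part (so $A$ is invertible and $p_1I-A$ is invertible for $p_1>0$). $X\succeq 0$ means $X$ is symmetric positive semidefinite; $X^{-T}=(X^{-1})^T$. Interpretation: $f(p_1)$ equals the squared $\mathcal{H}_2$ norm of the first-order model $G_1(s)=b_1/(s+p_1)$ with $b_1=2p_1C(p_1I-A)^{-1}B$, i.e. the first-order model with pole $-p_1$ interpolating $G(s)=C(sI-A)^{-1}B$ at $s=p_1$. *)

theory Defs
  imports "HOL-Analysis.Analysis"
begin

definition cmat :: "real^'n^'n \<Rightarrow> complex^'n^'n" where
  "cmat A = (\<chi> i j. complex_of_real (A $ i $ j))"

definition hurwitz :: "real^'n^'n \<Rightarrow> bool" where
  "hurwitz A \<longleftrightarrow> (\<forall>z::complex. (\<exists>v::complex^'n. v \<noteq> 0 \<and> cmat A *v v = z *s v) \<longrightarrow> Re z < 0)"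

definition psd :: "real^'m^'m \<Rightarrow> bool" where
  "psd X \<longleftrightarrow> transpose X = X \<and> (\<forall>x. 0 \<le> x \<bullet> (X *v x))"

definition outer :: "real^'n \<Rightarrow> real^'n \<Rightarrow> real^'n^'n" where
  "outer u v = (\<chi> i j. u $ i * v $ j)"

text \<open>f(p) = 2 C (pI-A)^{-1} (p B B^T) (pI-A)^{-T} C^T, with B a column, C a row (stored as vectors).\<close>
definition fH2 :: "real^'n^'n \<Rightarrow> real^'n \<Rightarrow> real^'n \<Rightarrow> real \<Rightarrow> real" where
  "fH2 A B C p = 2 * (C \<bullet> ((matrix_inv (p *\<^sub>R mat 1 - A) ** (p *\<^sub>R outer B B)
       ** transpose (matrix_inv (p *\<^sub>R mat 1 - A))) *v C))"

text \<open>The block matrix L indexed by unit + 'n: first row/column is the scalar block.\<close>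
definition blockmat :: "real \<Rightarrow> real^'n \<Rightarrow> real^'n \<Rightarrow> real^'n^'n \<Rightarrow> real^(unit + 'n)^(unit + 'n)" where
  "blockmat a r c D = (\<chi> i j. case i of
      Inl _ \<Rightarrow> (case j of Inl _ \<Rightarrow> a | Inr j' \<Rightarrow> r $ j')
    | Inr i' \<Rightarrow> (case j of Inl _ \<Rightarrow> c $ i' | Inr j' \<Rightarrow> D $ i' $ j'))"

end

theory Submission
  imports Defs
begin

text \<open>Put \<open>u = (p I - A)\<^sup>-\<^sup>T C\<close> and \<open>w = A\<^sup>T u\<close>, so that \<open>C = p u - w\<close> and \<open>f(p) = 2 p (B\<^sup>T u)\<^sup>2\<close>.
  Testing \<open>L \<succeq> 0\<close> with the vector \<open>(1, p w)\<close>, all terms involving \<open>A\<^sup>-\<^sup>1\<close> collapse because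
  \<open>A\<^sup>-\<^sup>T w = u\<close>, and what remains is
  \<open>0 \<le> \<gamma>\<^sup>2 - 2 p w\<^sup>T S w - 2 p w\<^sup>T T\<^sub>6 w = \<gamma>\<^sup>2 - 2 p w\<^sup>T S w - f(p)\<close>.
  Since \<open>S + S\<^sup>T \<succeq> 0\<close> the middle term is nonpositive, which gives \<open>f(p) \<le> \<gamma>\<^sup>2\<close>.\<close>

lemma hurwitz_real_eigenvalue_neg:
  fixes A :: "real^'n^'n"
  assumes "hurwitz A" "A *v x = c *\<^sub>R x" "x \<noteq> 0"
  shows "c < 0"
proof -
  let ?v = "\<chi> i. complex_of_real (x $ i)"
  have "?v \<noteq> 0" using assms(3) by (auto simp: vec_eq_iff)
  moreover have "(A *v x) $ i = c * x $ i" for i using assms(2) by (simp add: vec_eq_iff)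
  then have "cmat A *v ?v = complex_of_real c *s ?v"
    by (auto simp: vec_eq_iff cmat_def matrix_vector_mult_def simp flip: of_real_mult of_real_sum)
  ultimately show ?thesis using assms(1) unfolding hurwitz_def by fastforce
qed

lemma hurwitz_shift_invertible:
  fixes A :: "real^'n^'n"
  assumes "hurwitz A" "0 \<le> p"
  shows "invertible (p *\<^sub>R mat 1 - A)"
  unfolding invertible_left_inverse matrix_left_invertible_ker
proof (intro allI impI)
  fix x assume "(p *\<^sub>R mat 1 - A) *v x = 0"
  then have "A *v x = p *\<^sub>R x"
    by (simp add: matrix_vector_mult_diff_rdistrib flip: scaleR_matrix_vector_assoc)
  then show "x = 0" using hurwitz_real_eigenvalue_neg[OF assms(1)] assms(2) by fastforce
qed

lemma hurwitz_invertible: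
  fixes A :: "real^'n^'n"
  assumes "hurwitz A"
  shows "invertible A"
  using scalar_invertible[of "- 1", OF _ hurwitz_shift_invertible[OF assms order_refl]] by simp

lemma matrix_inv_mult:
  fixes A :: "'a::semiring_1^'n^'m"
  assumes "invertible A"
  shows "A ** matrix_inv A = mat 1" and "matrix_inv A ** A = mat 1"
  using someI_ex[OF assms[unfolded invertible_def]] unfolding matrix_inv_def by blast+

lemma transpose_matrix_inv_cancel:
  fixes M :: "real^'n^'n"
  assumes "invertible M"
  shows "transpose M *v (transpose (matrix_inv M) *v x) = x"
    and "transpose (matrix_inv M) *v (transpose M *v x) = x"
  by (simp_all add: matrix_vector_mul_assoc matrix_inv_mult[OF assms]
      del: transpose_matrix_vector flip: matrix_transpose_mul)

lemma transpose_shift_resolvent_identity: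
  fixes A :: "real^'n^'n" and c :: "real^'n"
  assumes "invertible (p *\<^sub>R mat 1 - A)"
  defines "u \<equiv> transpose (matrix_inv (p *\<^sub>R mat 1 - A)) *v c"
  shows "c = p *\<^sub>R u - transpose A *v u"
proof -
  have "transpose (p *\<^sub>R mat 1 - A) = p *\<^sub>R mat 1 - transpose A"
    by (simp add: transpose_def mat_def vec_eq_iff)
  moreover have "c = transpose (p *\<^sub>R mat 1 - A) *v u"
    unfolding u_def using assms(1)
    by (simp add: transpose_matrix_inv_cancel del: transpose_matrix_vector)
  ultimately show ?thesis
    by (simp add: matrix_vector_mult_diff_rdistrib
        del: transpose_matrix_vector flip: scaleR_matrix_vector_assoc)
qed

lemma inner_matrix_vector_transpose:
  fixes M :: "real^'n^'m"
  shows "x \<bullet> (M *v y) = (transpose M *v x) \<bullet> y"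
  by (simp add: dot_lmul_matrix)

lemma quadratic_form_transpose:
  fixes M :: "real^'n^'n"
  shows "x \<bullet> (transpose M *v x) = x \<bullet> (M *v x)"
  by (metis inner_matrix_vector_transpose inner_commute transpose_transpose)

lemma matrix_vector_mult_uminus:
  fixes M :: "real^'n^'m"
  shows "(- M) *v x = - (M *v x)" and "M *v (- x) = - (M *v x)"
  by (simp_all add: matrix_vector_mult_def vec_eq_iff sum_negf)

lemma outer_mult_vector: "outer u v *v x = (v \<bullet> x) *\<^sub>R u"
  by (simp add: outer_def matrix_vector_mult_def vec_eq_iff inner_vec_def sum_distrib_left
      sum_distrib_right mult.commute mult.left_commute)

lemma quadratic_form_congruence_outer:
  fixes M :: "real^'n^'n"
  shows "x \<bullet> ((M ** outer b b ** transpose M) *v x) = (b \<bullet> (transpose M *v x))\<^sup>2"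
  by (simp flip: matrix_vector_mul_assoc add: outer_mult_vector dot_lmul_matrix[symmetric]
      power2_eq_square inner_commute)

lemma fH2_eq:
  "fH2 A B C p = 2 * p * (B \<bullet> (transpose (matrix_inv (p *\<^sub>R mat 1 - A)) *v C))\<^sup>2"
proof -
  let ?M = "matrix_inv (p *\<^sub>R mat 1 - A)"
  have "?M ** (p *\<^sub>R outer B B) ** transpose ?M = p *\<^sub>R (?M ** outer B B ** transpose ?M)"
    by (simp add: matrix_scalar_ac scalar_matrix_assoc)
  then show ?thesis
    by (simp add: fH2_def quadratic_form_congruence_outer
        del: transpose_matrix_vector flip: scaleR_matrix_vector_assoc)
qed

lemma blockmat_quadratic_form:
  fixes r y :: "real^'n" and D :: "real^'n^'n"
  defines "x \<equiv> (\<chi> i. case i of Inl _ \<Rightarrow> 1 | Inr j \<Rightarrow> y $ j) :: real^(unit + 'n)"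
  shows "x \<bullet> (blockmat a r r D *v x) = a + 2 * (y \<bullet> r) + y \<bullet> (D *v y)"
  by (simp add: x_def blockmat_def inner_vec_def matrix_vector_mult_def
      flip: UNIV_Plus_UNIV add: sum.Plus sum.distrib sum_distrib_left algebra_simps)

lemma psd_blockmat_quadratic_form_nonneg:
  fixes r y :: "real^'n" and D :: "real^'n^'n"
  assumes "psd (blockmat a r r D)"
  shows "0 \<le> a + 2 * (y \<bullet> r) + y \<bullet> (D *v y)"
  using assms unfolding psd_def blockmat_quadratic_form[symmetric] by blast

lemma psd_symmetric_part_quadratic_form_nonneg:
  fixes S :: "real^'n^'n"
  assumes "psd (S + transpose S)"
  shows "0 \<le> x \<bullet> (S *v x)"
proof -
  have "0 \<le> x \<bullet> ((S + transpose S) *v x)"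
    using assms unfolding psd_def by blast
  also have "\<dots> = 2 * (x \<bullet> (S *v x))"
    by (simp add: matrix_vector_mult_add_rdistrib inner_add_right quadratic_form_transpose
        del: transpose_matrix_vector)
  finally show ?thesis by simp
qed

lemma lmi_test_vector_cross_terms:
  fixes P M :: "real^'n^'n" and u w :: "real^'n"
  assumes "transpose M *v w = u" and "C = p *\<^sub>R u - w"
  shows "2 * ((p *\<^sub>R w) \<bullet> (P *v C))
           - (p *\<^sub>R w) \<bullet> ((P ** transpose M + M ** transpose P) *v (p *\<^sub>R w))
         = - 2 * p * (w \<bullet> (P *v w))"
proof -
  have "w \<bullet> ((P ** transpose M) *v w) = w \<bullet> (P *v u)"
    using assms(1) by (simp del: transpose_matrix_vector flip: matrix_vector_mul_assoc)
  moreover have "w \<bullet> ((M ** transpose P) *v w) = w \<bullet> (P *v u)"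
  proof -
    have "w \<bullet> ((M ** transpose P) *v w) = u \<bullet> (transpose P *v w)"
      using assms(1)
      by (simp add: inner_matrix_vector_transpose
          del: transpose_matrix_vector flip: matrix_vector_mul_assoc)
    also have "\<dots> = w \<bullet> (P *v u)"
      by (metis inner_matrix_vector_transpose inner_commute transpose_transpose)
    finally show ?thesis .
  qed
  ultimately show ?thesis
    unfolding assms(2)
    by (simp add: matrix_vector_mult_add_rdistrib matrix_vector_mult_diff_distrib
        matrix_vector_mult_scaleR inner_add_right inner_diff_right algebra_simps)
qed

theorem proposition1:
  fixes A S :: "real^'n^'n" and B C :: "real^'n" and \<gamma> :: real
  assumes "hurwitz A"
  defines "T2 \<equiv> - C"
      and "T4 \<equiv> matrix_inv A"
      and "T6 \<equiv> matrix_inv A ** outer B B ** transpose (matrix_inv A)"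
  defines "T3 \<equiv> T6 *v C"
      and "T5 \<equiv> - (T6 ** transpose T4 + T4 ** transpose T6)"
  assumes "psd (S + transpose S)"
      and "psd (blockmat (\<gamma>^2) (T3 - S *v T2) (T3 - S *v T2)
                 (- (S ** transpose T4) - T4 ** transpose S + T5))"
  shows "\<forall>p1 > 0. \<gamma>^2 \<ge> fH2 A B C p1"
proof (intro allI impI)
  fix p :: real assume "p > 0"
  define u where "u = transpose (matrix_inv (p *\<^sub>R mat 1 - A)) *v C"
  define w where "w = transpose A *v u"
  have C_eq: "C = p *\<^sub>R u - w"
    unfolding u_def w_def using hurwitz_shift_invertible[OF assms(1)] \<open>p > 0\<close>
    by (simp add: transpose_shift_resolvent_identity del: transpose_matrix_vector)
  have T4w: "transpose T4 *v w = u"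
    unfolding T4_def w_def using hurwitz_invertible[OF assms(1)]
    by (simp add: transpose_matrix_inv_cancel del: transpose_matrix_vector)
  have T6w: "w \<bullet> (T6 *v w) = (B \<bullet> u)\<^sup>2"
    using T4w unfolding T6_def T4_def
    by (simp add: quadratic_form_congruence_outer del: transpose_matrix_vector)
  have "0 \<le> \<gamma>\<^sup>2 + 2 * ((p *\<^sub>R w) \<bullet> (T3 - S *v T2))
      + (p *\<^sub>R w) \<bullet> ((- (S ** transpose T4) - T4 ** transpose S + T5) *v (p *\<^sub>R w))"
    by (rule psd_blockmat_quadratic_form_nonneg[OF assms(8)])
  also have "\<dots> = \<gamma>\<^sup>2 - 2 * p * (w \<bullet> (S *v w)) - 2 * p * (w \<bullet> (T6 *v w))"
    using lmi_test_vector_cross_terms[OF T4w C_eq, of S]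
      lmi_test_vector_cross_terms[OF T4w C_eq, of T6]
    unfolding T3_def T2_def T5_def
    by (simp add: matrix_vector_mult_add_rdistrib matrix_vector_mult_diff_rdistrib
        matrix_vector_mult_uminus inner_add_right inner_diff_right algebra_simps)
  finally have "fH2 A B C p \<le> \<gamma>\<^sup>2 - 2 * p * (w \<bullet> (S *v w))"
    unfolding fH2_eq u_def[symmetric] T6w by simp
  moreover have "0 \<le> p * (w \<bullet> (S *v w))"
    using psd_symmetric_part_quadratic_form_nonneg[OF assms(7)] \<open>p > 0\<close> by simp
  ultimately show "fH2 A B C p \<le> \<gamma>\<^sup>2" by linarith
qed

end
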